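(* Let $s\in[0,1]$ and $x\in\mathbb R$. Then there exists a first time $t_0=t_0(s,x)\ge0$ at which the solution $(\xi(\cdot,x),\eta(\cdot,x))$ of the initial value problem (IVP) meets the graph of $w+s\varphi$, i.e. $\eta(t_0,x)=w(\xi(t_0,x))+s\varphi(\xi(t_0,x))$ and this fails for $0\le t<t_0$. Moreover: if $s=0$ or $\varphi(x)=0$ then $t_0(s,x)=0$; if $\varphi(x)\ne0$ and $\varphi'(x)=w'(x)=0$ then $t_0(s,x)=s$; in all other cases $0\le t_0(s,x)\le s$. Finally, $t_0$ is of class $C^2$ on $[0,1]\times\{x\in\mathbb R:\varphi(x)\ne0\}$, and if $\varphi(x)\neq0$ then $\varphi(\xi(t,x))\varphi(x)>0$ for all $0\le t\le t_0(s,x)$.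
   Context: Let $w\in C^3(\mathbb R)$ be periodic with $w>0$ on $[-1,1]$. Let $-1<a<b<1$ and let $\varphi:[a,b]\to\mathbb R$ be a polynomial with $\varphi^{(k)}(a)=\varphi^{(k)}(b)=0$ for $k=0,1,2,3$, extended by zero outside $[a,b]$ (so $\varphi\in C^3_c(\mathbb R)$). For $x\in\mathbb R$, $(\xi(t,x),\eta(t,x))$, $t\in\mathbb R$, denotes the unique global solution of (IVP): $$\frac{d\xi}{dt}=-w'(\xi)\varphi(\xi)-(\eta-w(\xi))\varphi'(\xi),\qquad\frac{d\eta}{dt}=\varphi(\xi),\qquad \xi(0)=x,\ \eta(0)=w(x).$$ *)

theory Defs
  imports "HOL-Analysis.Analysis" "HOL-Computational_Algebra.Polynomial"
begin

definition C3 :: "(real \<Rightarrow> real) \<Rightarrow> bool" where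
  "C3 f \<longleftrightarrow> (\<forall>k<3. \<forall>x. ((deriv ^^ k) f) differentiable (at x))
                 \<and> continuous_on UNIV ((deriv ^^ 3) f)"

definition periodic :: "(real \<Rightarrow> real) \<Rightarrow> bool" where
  "periodic f \<longleftrightarrow> (\<exists>T>0. \<forall>x. f (x + T) = f x)"

definition bump :: "real poly \<Rightarrow> real \<Rightarrow> real \<Rightarrow> real \<Rightarrow> real" where
  "bump p a b x = (if a \<le> x \<and> x \<le> b then poly p x else 0)"

definition C2_on :: "(real \<times> real) set \<Rightarrow> (real \<times> real \<Rightarrow> real) \<Rightarrow> bool" where
  "C2_on S f \<longleftrightarrow> (\<exists>f1 f2 f11 f12 f21 f22.
     (\<forall>p\<in>S. (f has_derivative (\<lambda>h. f1 p * fst h + f2 p * snd h)) (at p within S)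
           \<and> (f1 has_derivative (\<lambda>h. f11 p * fst h + f12 p * snd h)) (at p within S)
           \<and> (f2 has_derivative (\<lambda>h. f21 p * fst h + f22 p * snd h)) (at p within S))
     \<and> continuous_on S f11 \<and> continuous_on S f12
     \<and> continuous_on S f21 \<and> continuous_on S f22)"

end

theory Submission
  imports Defs
begin

text \<open>Write \<open>\<phi> = bump p a b\<close>. While a trajectory starting at \<open>x\<close> with \<open>\<phi> x \<noteq> 0\<close> stays in the
  support of \<open>\<phi>\<close>, its level \<open>\<sigma> = (\<eta> - w \<xi>) / \<phi> \<xi>\<close> obeys \<open>\<sigma>' = 1 + (w' \<xi> + \<sigma> \<phi>' \<xi>)\<^sup>2 \<ge> 1\<close>,
  and a Gronwall argument shows that \<open>\<phi> \<xi>\<close> cannot vanish while \<open>\<sigma> \<in> [0,1]\<close>. Hence \<open>\<sigma>\<close> reaches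
  \<open>s\<close> at a unique first time \<open>t\<^sub>0 \<le> s\<close>, and the sign of \<open>\<phi> \<xi>\<close> is preserved up to \<open>t\<^sub>0\<close>.

  For the regularity, the hitting point \<open>Y s x = \<xi> (t\<^sub>0 s x) x\<close> solves, as a function of \<open>s\<close>,
  an ODE \<open>\<partial>\<^sub>s Y = h s Y\<close> with \<open>Y 0 x = x\<close>, and \<open>t\<^sub>0 s x = \<integral>\<^sub>0\<^sup>s k r (Y r x) dr\<close>, where \<open>h\<close>
  and \<open>k\<close> are \<open>C\<^sup>2\<close> in \<open>y\<close> with bounded derivatives. Differentiable dependence on initial data,
  proved by Gronwall estimates for the variational equation, then makes \<open>t\<^sub>0\<close> a \<open>C\<^sup>2\<close>
  function. If \<open>w' x = \<phi>' x = 0\<close> then \<open>h s x = 0\<close>, so \<open>Y s x = x\<close> and \<open>t\<^sub>0 s x = s\<close>.\<close>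

lemma bump_continuous:
  assumes "a < b" "poly q a = 0" "poly q b = 0"
  shows "continuous_on UNIV (bump q a b)"
proof -
  have "continuous_on ({a..b} \<union> ({..a} \<union> {b..})) (\<lambda>x. if x \<in> {a..b} then poly q x else 0)"
    by (rule continuous_on_cases) (use assms in \<open>auto intro!: continuous_intros\<close>)
  moreover have "{a..b} \<union> ({..a} \<union> {b..}) = (UNIV::real set)" by auto
  ultimately show ?thesis unfolding bump_def[abs_def] by (simp add: atLeastAtMost_iff)
qed

lemma bump_has_real_derivative:
  assumes ab: "a < b" and "poly q a = 0" "poly q b = 0" "poly (pderiv q) a = 0" "poly (pderiv q) b = 0"
  shows "(bump q a b has_real_derivative bump (pderiv q) a b y) (at y)"
proof -
  have cl: "closure (- {a..b}) = {..a} \<union> {b..}"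
  proof -
    have "- {a..b} = {..<a} \<union> {b<..}" by auto
    then show ?thesis by (simp add: closure_Un)
  qed
  have "((\<lambda>y. if y \<in> {a..b} then poly q y else 0) has_vector_derivative
        (if y \<in> {a..b} then poly (pderiv q) y else 0)) (at y within {a..b} \<union> - {a..b})"
  proof (rule has_vector_derivative_If_within_closures)
    show "(poly q has_vector_derivative poly (pderiv q) y)
        (at y within {a..b} \<union> closure {a..b} \<inter> closure (- {a..b}))"
      by (rule has_vector_derivative_at_within, subst has_real_derivative_iff_has_vector_derivative[symmetric])
         (rule poly_DERIV)
    show "((\<lambda>_. 0) has_vector_derivative 0) (at y within - {a..b} \<union> closure {a..b} \<inter> closure (- {a..b}))"
      by (rule has_vector_derivative_const)
  qed (use assms cl in auto)
  then show ?thesis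
    by (simp add: bump_def[abs_def] has_real_derivative_iff_has_vector_derivative)
qed

lemma mean_value_between:
  fixes f f' :: "real \<Rightarrow> real"
  assumes "\<And>z. \<bar>z - x\<bar> \<le> \<bar>y - x\<bar> \<Longrightarrow> (f has_real_derivative f' z) (at z)"
  shows "\<exists>z. \<bar>z - x\<bar> \<le> \<bar>y - x\<bar> \<and> f y - f x = (y - x) * f' z"
proof -
  consider "y = x" | "x < y" | "y < x" by linarith
  then show ?thesis
  proof cases
    case 2
    then obtain z where "x < z" "z < y" "f y - f x = (y - x) * f' z"
      using MVT2[OF 2, of f f'] assms by force
    then show ?thesis by (intro exI[of _ z]) auto
  next
    case 3
    then obtain z where "y < z" "z < x" "f x - f y = (x - y) * f' z"
      using MVT2[OF 3, of f f'] assms by force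
    then show ?thesis by (intro exI[of _ z]) (auto simp: algebra_simps)
  qed auto
qed

lemma linearization_error_bound:
  fixes f f' :: "real \<Rightarrow> real"
  assumes "\<And>z. \<bar>z - x\<bar> \<le> \<bar>y - x\<bar> \<Longrightarrow> (f has_real_derivative f' z) (at z)"
    and "\<And>z. \<bar>z - x\<bar> \<le> \<bar>y - x\<bar> \<Longrightarrow> \<bar>f' z - c\<bar> \<le> e"
  shows "\<bar>f y - f x - c * (y - x)\<bar> \<le> e * \<bar>y - x\<bar>"
proof -
  obtain z where z: "\<bar>z - x\<bar> \<le> \<bar>y - x\<bar>" and eq: "f y - f x = (y - x) * f' z"
    using mean_value_between[OF assms(1)] by blast
  have "f y - f x - c * (y - x) = (f' z - c) * (y - x)"
    by (simp add: eq algebra_simps)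
  then have "\<bar>f y - f x - c * (y - x)\<bar> = \<bar>f' z - c\<bar> * \<bar>y - x\<bar>"
    by (simp add: abs_mult)
  also have "\<dots> \<le> e * \<bar>y - x\<bar>"
    using assms(2)[OF z] by (rule mult_right_mono) simp
  finally show ?thesis .
qed

lemma lipschitz_from_derivative_bound:
  fixes f f' :: "real \<Rightarrow> real"
  assumes cf: "continuous_on {u..v} f"
    and df: "\<And>s. u < s \<Longrightarrow> s < v \<Longrightarrow> (f has_real_derivative f' s) (at s)"
    and bf: "\<And>s. u < s \<Longrightarrow> s < v \<Longrightarrow> \<bar>f' s\<bar> \<le> M"
    and s: "s \<in> {u..v}" and s': "s' \<in> {u..v}"
  shows "\<bar>f s' - f s\<bar> \<le> M * \<bar>s' - s\<bar>"
proof -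
  have main: "\<bar>f t' - f t\<bar> \<le> M * (t' - t)" if tt': "t < t'" "t \<in> {u..v}" "t' \<in> {u..v}" for t t'
  proof -
    have "continuous_on {t..t'} f" using cf tt' by (auto intro: continuous_on_subset)
    moreover have "f differentiable (at z)" if "t < z" "z < t'" for z
      using df[of z] that tt' unfolding real_differentiable_def by auto
    ultimately obtain l z where z: "t < z" "z < t'" "DERIV f z :> l" "f t' - f t = (t' - t) * l"
      using MVT[OF tt'(1)] by blast
    then have "l = f' z" using DERIV_unique[OF z(3) df[of z]] tt' by auto
    with z have z: "t < z" "z < t'" "f t' - f t = (t' - t) * f' z" by auto
    have "\<bar>f t' - f t\<bar> = (t' - t) * \<bar>f' z\<bar>" using z by (simp add: abs_mult)
    also have "\<dots> \<le> (t' - t) * M" using bf[of z] z tt' by (intro mult_left_mono) auto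
    finally show ?thesis by (simp add: mult.commute)
  qed
  consider "s = s'" | "s < s'" | "s' < s" by linarith
  then show ?thesis
  proof cases
    case 2 then show ?thesis using main[OF 2 s s'] by simp
  next
    case 3 then show ?thesis using main[OF 3 s' s] by (simp add: abs_minus_commute)
  qed simp
qed

lemma gronwall_square:
  fixes f f' :: "real \<Rightarrow> real"
  assumes cont: "continuous_on {0..t} f"
    and der: "\<And>s. 0 < s \<Longrightarrow> s < t \<Longrightarrow> (f has_real_derivative f' s) (at s)"
    and bnd: "\<And>s. 0 < s \<Longrightarrow> s < t \<Longrightarrow> \<bar>f' s\<bar> \<le> L * \<bar>f s\<bar> + e"
    and L: "L \<ge> 0" and t: "0 \<le> t"
  shows "(f t)^2 \<le> ((f 0)^2 + e^2 * t) * exp ((2*L+1)*t)"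
proof -
  define c where "c = 2*L+1"
  define G where "G r = (f r)^2 * exp (- (c*r)) - e^2 * r" for r
  have "G t \<le> G 0"
  proof (rule DERIV_nonpos_imp_decreasing_open[OF t])
    fix s assume s: "0 < s" "s < t"
    have D: "(G has_real_derivative (2 * f s * f' s - c * (f s)^2) * exp (- (c * s)) - e^2) (at s)"
      unfolding G_def[abs_def]
      by (auto intro!: derivative_eq_intros der s simp: algebra_simps)
    have "2 * f s * f' s \<le> 2 * \<bar>f s\<bar> * (L * \<bar>f s\<bar> + e)"
    proof -
      have "2 * f s * f' s \<le> 2 * \<bar>f s\<bar> * \<bar>f' s\<bar>"
        using abs_ge_self[of "f s * f' s"] by (simp add: abs_mult)
      also have "\<dots> \<le> 2 * \<bar>f s\<bar> * (L * \<bar>f s\<bar> + e)"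
        by (intro mult_left_mono bnd s) auto
      finally show ?thesis .
    qed
    \<comment> \<open>\<open>2 \<bar>f\<bar> e \<le> f\<^sup>2 + e\<^sup>2\<close> absorbs the inhomogeneity\<close>
    also have "\<dots> \<le> c * (f s)^2 + e^2"
      using sum_squares_ge_zero[of "\<bar>f s\<bar> - e" 0]
      by (simp add: c_def power2_eq_square algebra_simps)
    finally have "2 * f s * f' s - c * (f s)^2 \<le> e^2" by simp
    then have "(2 * f s * f' s - c * (f s)^2) * exp (- (c * s)) \<le> e^2 * exp (- (c * s))"
      by (rule mult_right_mono) simp
    also have "\<dots> \<le> e^2" using s t L by (simp add: c_def mult_left_le)
    finally show "\<exists>y. (G has_real_derivative y) (at s) \<and> y \<le> 0" using D by auto
  next
    show "continuous_on {0..t} G" unfolding G_def[abs_def]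
      by (intro continuous_intros cont)
  qed
  then have "(f t)^2 * exp (- (c * t)) \<le> (f 0)^2 + e^2 * t" by (simp add: G_def)
  then have "(f t)^2 * exp (- (c * t)) * exp (c * t) \<le> ((f 0)^2 + e^2 * t) * exp (c * t)"
    by (rule mult_right_mono) simp
  then show ?thesis by (simp add: c_def mult.assoc flip: exp_add)
qed

lemma has_derivative_of_partials:
  fixes f fs fx :: "real \<times> real \<Rightarrow> real"
  assumes U: "open U"
    and ds: "\<And>s x. s \<in> S \<Longrightarrow> x \<in> U \<Longrightarrow>
               ((\<lambda>s. f (s,x)) has_real_derivative fs (s,x)) (at s within S)"
    and dx: "\<And>s x. s \<in> S \<Longrightarrow> x \<in> U \<Longrightarrow>
               ((\<lambda>x. f (s,x)) has_real_derivative fx (s,x)) (at x)"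
    and cx: "continuous_on (S \<times> U) fx"
    and p: "p \<in> S \<times> U"
  shows "(f has_derivative (\<lambda>h. fs p * fst h + fx p * snd h)) (at p within S \<times> U)"
  unfolding has_derivative_within_alt
proof (intro conjI allI impI)
  show "bounded_linear (\<lambda>h. fs p * fst h + fx p * snd h)"
    by (intro bounded_linear_intros)
next
  fix e :: real assume e: "e > 0"
  obtain s x where px: "p = (s,x)" and s: "s \<in> S" and x: "x \<in> U" using p by auto
  have "((\<lambda>s. f (s,x)) has_derivative (\<lambda>h. fs p * h)) (at s within S)"
    using ds[OF s x] px by (simp add: has_field_derivative_def)
  then obtain d1 where d1: "d1 > 0" and d1b: "\<And>s'. s' \<in> S \<Longrightarrow> \<bar>s' - s\<bar> < d1 \<Longrightarrow>
      \<bar>f (s',x) - f p - fs p * (s' - s)\<bar> \<le> e/2 * \<bar>s' - s\<bar>"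
    unfolding has_derivative_within_alt using e px by (metis half_gt_zero real_norm_def)
  obtain d2 where d2: "d2 > 0" and d2b: "\<And>q. q \<in> S \<times> U \<Longrightarrow> dist q p < d2 \<Longrightarrow>
      dist (fx q) (fx p) < e/2"
    using cx p e unfolding continuous_on_iff by (meson half_gt_zero)
  obtain d3 where d3: "d3 > 0" and d3b: "ball x d3 \<subseteq> U"
    using U x open_contains_ball by blast
  define d where "d = min d1 (min d2 d3)"
  have "norm (f y - f p - (fs p * fst (y - p) + fx p * snd (y - p))) \<le> e * norm (y - p)"
    if y: "y \<in> S \<times> U" "norm (y - p) < d" for y
  proof -
    obtain s' x' where yx: "y = (s',x')" and s': "s' \<in> S" using y by auto
    have ns: "\<bar>s' - s\<bar> \<le> norm (y - p)" and nx: "\<bar>x' - x\<bar> \<le> norm (y - p)"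
      using norm_fst_le[of "s' - s" "x' - x"] norm_snd_le[of "x' - x" "s' - s"] yx px by auto
    \<comment> \<open>along the horizontal segment from \<open>(s',x)\<close> to \<open>(s',x')\<close> the partial \<open>fx\<close> stays \<open>e/2\<close>-close to \<open>fx p\<close>\<close>
    have near: "z \<in> U \<and> \<bar>fx (s',z) - fx p\<bar> \<le> e/2" if z: "\<bar>z - x\<bar> \<le> \<bar>x' - x\<bar>" for z
    proof
      show zU: "z \<in> U" using d3b nx y(2) z by (auto simp: d_def dist_real_def subset_iff)
      have "(z - x)^2 \<le> (x' - x)^2" using z by (simp add: abs_le_square_iff)
      then have "dist (s',z) p \<le> norm (y - p)"
        using px yx by (simp add: dist_Pair_Pair norm_Pair real_sqrt_le_mono dist_real_def)
      then show "\<bar>fx (s',z) - fx p\<bar> \<le> e/2"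
        using d2b[of "(s',z)"] y(2) s' zU by (auto simp: d_def dist_real_def)
    qed
    have "\<bar>f (s',x') - f (s',x) - fx p * (x' - x)\<bar> \<le> e/2 * \<bar>x' - x\<bar>"
      by (rule linearization_error_bound[where f'="\<lambda>z. fx (s',z)"]) (use dx s' near in auto)
    moreover have "\<bar>f (s',x) - f p - fs p * (s' - s)\<bar> \<le> e/2 * \<bar>s' - s\<bar>"
      using d1b[OF s'] ns y(2) by (simp add: d_def)
    moreover have "e/2 * \<bar>x' - x\<bar> + e/2 * \<bar>s' - s\<bar> \<le> e * norm (y - p)"
      using mult_left_mono[of "\<bar>x' - x\<bar> + \<bar>s' - s\<bar>" "2 * norm (y - p)" "e/2"] ns nx e
      by (simp add: algebra_simps)
    moreover have "f y - f p - (fs p * fst (y - p) + fx p * snd (y - p))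
        = (f (s',x') - f (s',x) - fx p * (x' - x)) + (f (s',x) - f p - fs p * (s' - s))"
      using yx px by simp
    ultimately show ?thesis unfolding real_norm_def by linarith
  qed
  moreover have "d > 0" using d1 d2 d3 by (simp add: d_def)
  ultimately show "\<exists>d>0. \<forall>y\<in>S \<times> U. norm (y - p) < d \<longrightarrow>
      norm (f y - f p - (fs p * fst (y - p) + fx p * snd (y - p))) \<le> e * norm (y - p)"
    by blast
qed

lemma integral_rescale_unit:
  fixes g :: "real \<Rightarrow> real"
  assumes "continuous_on {0..s} g" "0 \<le> s"
  shows "integral {0..s} g = s * integral {0..1} (\<lambda>\<theta>. g (s * \<theta>))"
proof (cases "s = 0")
  case False
  then have sp: "s > 0" using assms by auto
  have "(g has_integral integral {0..s} g) (cbox 0 s)"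
    using integrable_continuous_real[OF assms(1)] by (simp add: has_integral_integral)
  from has_integral_affinity'[OF this sp, of 0]
  have "((\<lambda>\<theta>. g (s * \<theta>)) has_integral integral {0..s} g / s) {0..1}"
    using sp by (simp add: divide_simps)
  then show ?thesis using sp by (simp add: integral_unique)
qed simp

lemma continuous_on_slice:
  assumes "continuous_on (S \<times> UNIV) (\<lambda>(r,x). g r x)"
  shows "continuous_on S (\<lambda>r. g r x)"
  by (rule continuous_on_compose2[OF assms, where f="\<lambda>r. (r,x)", simplified])
     (auto intro!: continuous_intros)

lemma continuous_on_integral_param:
  fixes g :: "real \<Rightarrow> real \<Rightarrow> real"
  assumes cg: "continuous_on ({0..1} \<times> UNIV) (\<lambda>(r,x). g r x)"
  shows "continuous_on ({0..1} \<times> UNIV) (\<lambda>(s,x). integral {0..s} (\<lambda>r. g r x))"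
proof -
  \<comment> \<open>rescaling to the fixed interval \<open>[0,1]\<close> reduces this to continuity of a parametric integral\<close>
  have "continuous_on (({0..1} \<times> UNIV) \<times> cbox 0 1) (\<lambda>(sx, \<theta>::real). (fst sx * \<theta>, snd sx))"
    by (auto intro!: continuous_intros simp: split_beta)
  moreover have "(\<lambda>(sx, \<theta>::real). (fst sx * \<theta>, snd sx)) ` (({0..1} \<times> UNIV) \<times> cbox 0 1) \<subseteq> {0..1} \<times> UNIV"
    by (auto simp: mult_le_one)
  ultimately have "continuous_on (({0..1} \<times> UNIV) \<times> cbox 0 1)
      (\<lambda>y. (\<lambda>(r,x). g r x) ((\<lambda>(sx, \<theta>::real). (fst sx * \<theta>, snd sx)) y))"
    by (rule continuous_on_compose2[OF cg])
  then have "continuous_on (({0..1} \<times> UNIV) \<times> cbox 0 1) (\<lambda>(sx, \<theta>). g (fst sx * \<theta>) (snd sx))"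
    by (simp add: split_beta)
  then have "continuous_on ({0..1} \<times> UNIV)
      (\<lambda>sx. fst sx * integral (cbox 0 1) (\<lambda>\<theta>. g (fst sx * \<theta>) (snd sx)))"
    by (intro continuous_intros integral_continuous_on_param) (simp add: case_prod_unfold)
  then show ?thesis
  proof (rule continuous_on_eq)
    fix sx :: "real \<times> real" assume "sx \<in> {0..1} \<times> UNIV"
    then show "fst sx * integral (cbox 0 1) (\<lambda>\<theta>. g (fst sx * \<theta>) (snd sx))
        = (\<lambda>(s,x). integral {0..s} (\<lambda>r. g r x)) sx"
      using integral_rescale_unit[of "fst sx" "\<lambda>r. g r (snd sx)"]
        continuous_on_subset[OF continuous_on_slice[OF cg], of "{0..fst sx}"]
      by (auto simp: split_beta)
  qed
qed

lemma has_real_derivative_integral_param: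
  fixes g gx :: "real \<Rightarrow> real \<Rightarrow> real"
  assumes s: "s \<in> {0..1}"
    and dg: "\<And>r x. r \<in> {0..1} \<Longrightarrow> ((\<lambda>x. g r x) has_real_derivative gx r x) (at x)"
    and cg: "continuous_on ({0..1} \<times> UNIV) (\<lambda>(r,x). g r x)"
    and cgx: "continuous_on ({0..1} \<times> UNIV) (\<lambda>(r,x). gx r x)"
  shows "((\<lambda>x. integral {0..s} (\<lambda>r. g r x)) has_real_derivative integral {0..s} (\<lambda>r. gx r x)) (at x)"
proof -
  have sub: "cbox 0 s \<subseteq> {0..1}" using s by auto
  have "((\<lambda>x. integral (cbox 0 s) (\<lambda>r. g r x)) has_field_derivative
      integral (cbox 0 s) (\<lambda>r. gx r x)) (at x within UNIV)"
  proof (rule leibniz_rule_field_derivative)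
    show "((\<lambda>x. g t x) has_field_derivative gx t x) (at x within UNIV)" if "t \<in> cbox 0 s" for x t
      using dg[of t x] that sub by auto
    show "(\<lambda>r. g r x) integrable_on cbox 0 s" for x
      using continuous_on_subset[OF continuous_on_slice[OF cg] sub]
      by (auto intro!: integrable_continuous_real)
    show "continuous_on (UNIV \<times> cbox 0 s) (\<lambda>(x, t). gx t x)"
    proof -
      have "continuous_on (UNIV \<times> cbox 0 s) (\<lambda>y. (\<lambda>(r,x). gx r x) ((\<lambda>(x,t). (t,x)) y))"
        by (rule continuous_on_compose2[OF cgx])
           (use sub in \<open>auto intro!: continuous_intros simp: split_beta\<close>)
      then show ?thesis by (simp add: split_beta)
    qed
  qed auto
  then show ?thesis by simp
qed

lemma integral_of_interior_derivative:
  fixes f f' :: "real \<Rightarrow> real"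
  assumes "continuous_on {0..s} f"
    and "\<And>r. 0 < r \<Longrightarrow> r < s \<Longrightarrow> (f has_real_derivative f' r) (at r)"
    and "0 \<le> s"
  shows "f s = f 0 + integral {0..s} f'"
proof -
  have "(f' has_integral (f s - f 0)) {0..s}"
    by (rule fundamental_theorem_of_calculus_interior)
       (use assms in \<open>auto simp: has_real_derivative_iff_has_vector_derivative\<close>)
  then show ?thesis by (simp add: integral_unique)
qed

lemma bounded_if_vanishing_outside:
  fixes g :: "real \<Rightarrow> real \<Rightarrow> real"
  assumes cg: "continuous_on (S \<times> UNIV) (\<lambda>(s,y). g s y)"
    and "compact S" "compact K"
    and vanish: "\<And>s y. y \<notin> K \<Longrightarrow> g s y = 0"
  shows "\<exists>M. \<forall>s\<in>S. \<forall>y. \<bar>g s y\<bar> \<le> M"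
proof -
  have "compact ((\<lambda>(s,y). g s y) ` (S \<times> K))"
    by (rule compact_continuous_image[OF continuous_on_subset[OF cg]])
       (auto intro: compact_Times assms)
  then obtain M where M: "\<And>v. v \<in> (\<lambda>(s,y). g s y) ` (S \<times> K) \<Longrightarrow> norm v \<le> M"
    using compact_imp_bounded bounded_iff by metis
  have "\<bar>g s y\<bar> \<le> max M 0" if "s \<in> S" for s y
  proof (cases "y \<in> K")
    case True then show ?thesis using M[of "g s y"] that by force
  qed (simp add: vanish)
  then show ?thesis by blast
qed

lemma C2_on_cong:
  assumes "C2_on S f" "\<And>p. p \<in> S \<Longrightarrow> f p = g p"
  shows "C2_on S g"
proof -
  obtain f1 f2 f11 f12 f21 f22 where
    D: "\<forall>p\<in>S. (f has_derivative (\<lambda>h. f1 p * fst h + f2 p * snd h)) (at p within S)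
           \<and> (f1 has_derivative (\<lambda>h. f11 p * fst h + f12 p * snd h)) (at p within S)
           \<and> (f2 has_derivative (\<lambda>h. f21 p * fst h + f22 p * snd h)) (at p within S)"
    and "continuous_on S f11" "continuous_on S f12" "continuous_on S f21" "continuous_on S f22"
    using assms(1) unfolding C2_on_def by blast
  moreover have "(g has_derivative (\<lambda>h. f1 p * fst h + f2 p * snd h)) (at p within S)"
    if p: "p \<in> S" for p
    by (rule has_derivative_transform[OF p _ conjunct1[OF D[rule_format, OF p]]])
       (use assms(2) in auto)
  ultimately show ?thesis unfolding C2_on_def by blast
qed

locale ode_initial_dependence =
  fixes h hy hyy Y :: "real \<Rightarrow> real \<Rightarrow> real" and L L2 M :: real
  assumes h_deriv: "\<And>s y. s \<in> {0..1} \<Longrightarrow> (h s has_real_derivative hy s y) (at y)"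
    and hy_deriv: "\<And>s y. s \<in> {0..1} \<Longrightarrow> (hy s has_real_derivative hyy s y) (at y)"
    and h_cont: "continuous_on ({0..1} \<times> UNIV) (\<lambda>(s,y). h s y)"
    and hy_cont: "continuous_on ({0..1} \<times> UNIV) (\<lambda>(s,y). hy s y)"
    and hyy_cont: "continuous_on ({0..1} \<times> UNIV) (\<lambda>(s,y). hyy s y)"
    and h_bound: "\<And>s y. s \<in> {0..1} \<Longrightarrow> \<bar>h s y\<bar> \<le> M"
    and hy_bound: "\<And>s y. s \<in> {0..1} \<Longrightarrow> \<bar>hy s y\<bar> \<le> L"
    and hyy_bound: "\<And>s y. s \<in> {0..1} \<Longrightarrow> \<bar>hyy s y\<bar> \<le> L2"
    and Y_integral_eq: "\<And>s x. s \<in> {0..1} \<Longrightarrow> Y s x = x + integral {0..s} (\<lambda>r. h r (Y r x))"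
    and Y_continuous_s: "\<And>x. continuous_on {0..1} (\<lambda>s. Y s x)"
begin

lemma L_nonneg: "L \<ge> 0" and L2_nonneg: "L2 \<ge> 0" and M_nonneg: "M \<ge> 0"
  using hy_bound[of 0 0] hyy_bound[of 0 0] h_bound[of 0 0] by auto

lemma continuous_on_along_Y:
  assumes "continuous_on ({0..1} \<times> UNIV) (\<lambda>(s,y). g s y)"
  shows "continuous_on {0..1} (\<lambda>r. g r (Y r x))"
proof -
  have "continuous_on {0..1} (\<lambda>r. (\<lambda>(s,y). g s y) (r, Y r x))"
    by (rule continuous_on_compose2[OF assms]) (auto intro!: continuous_intros Y_continuous_s)
  then show ?thesis by simp
qed

lemma Y_initial: "Y 0 x = x"
  using Y_integral_eq[of 0 x] by simp

lemma Y_has_derivative_s_within: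
  assumes s: "s \<in> {0..1}"
  shows "((\<lambda>s. Y s x) has_real_derivative h s (Y s x)) (at s within {0..1})"
proof -
  have "((\<lambda>s. x + integral {0..s} (\<lambda>r. h r (Y r x))) has_real_derivative h s (Y s x))
      (at s within {0..1})"
    using integral_has_real_derivative[OF continuous_on_along_Y[OF h_cont] s]
    by (auto intro!: derivative_eq_intros)
  then show ?thesis
    by (rule has_field_derivative_transform_within[where d=1]) (use s Y_integral_eq in auto)
qed

lemma Y_has_derivative_s:
  assumes "0 < s" "s < 1"
  shows "((\<lambda>s. Y s x) has_real_derivative h s (Y s x)) (at s)"
  using Y_has_derivative_s_within[of s x] assms by (simp add: at_within_Icc_at)

lemma hy_lipschitz:
  assumes "r \<in> {0..1}"
  shows "\<bar>hy r y1 - hy r y2\<bar> \<le> L2 * \<bar>y1 - y2\<bar>"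
  using linearization_error_bound[of y2 y1 "hy r" "hyy r" 0 L2] hy_deriv[OF assms] hyy_bound[OF assms]
  by simp

lemma h_lipschitz:
  assumes "r \<in> {0..1}"
  shows "\<bar>h r y1 - h r y2\<bar> \<le> L * \<bar>y1 - y2\<bar>"
  using linearization_error_bound[of y2 y1 "h r" "hy r" 0 L] h_deriv[OF assms] hy_bound[OF assms]
  by simp

lemma h_taylor_bound:
  assumes r: "r \<in> {0..1}"
  shows "\<bar>h r y1 - h r y2 - hy r y2 * (y1 - y2)\<bar> \<le> L2 * (y1 - y2)^2"
proof -
  have "\<bar>h r y1 - h r y2 - hy r y2 * (y1 - y2)\<bar> \<le> L2 * \<bar>y1 - y2\<bar> * \<bar>y1 - y2\<bar>"
  proof (rule linearization_error_bound)
    show "\<bar>hy r z - hy r y2\<bar> \<le> L2 * \<bar>y1 - y2\<bar>" if "\<bar>z - y2\<bar> \<le> \<bar>y1 - y2\<bar>" for z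
      using hy_lipschitz[OF r, of z y2] mult_left_mono[OF that L2_nonneg] by linarith
  qed (use h_deriv r in auto)
  then show ?thesis by (simp add: power2_eq_square mult.assoc)
qed

lemma Y_diff_square_bound:
  assumes s: "s \<in> {0..1}"
  shows "(Y s x1 - Y s x2)^2 \<le> (x1 - x2)^2 * exp (2*L+1)"
proof -
  have "(Y s x1 - Y s x2)^2 \<le> ((Y 0 x1 - Y 0 x2)^2 + 0^2 * s) * exp ((2*L+1) * s)"
  proof (rule gronwall_square[where f'="\<lambda>r. h r (Y r x1) - h r (Y r x2)" and L=L])
    show "continuous_on {0..s} (\<lambda>r. Y r x1 - Y r x2)"
      using s by (auto intro!: continuous_intros intro: continuous_on_subset[OF Y_continuous_s])
    show "((\<lambda>r. Y r x1 - Y r x2) has_real_derivative h r (Y r x1) - h r (Y r x2)) (at r)"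
      if "0 < r" "r < s" for r
      using that s by (auto intro!: derivative_eq_intros Y_has_derivative_s)
    show "\<bar>h r (Y r x1) - h r (Y r x2)\<bar> \<le> L * \<bar>Y r x1 - Y r x2\<bar> + 0" if "0 < r" "r < s" for r
      using h_lipschitz[of r] that s by auto
  qed (use L_nonneg s in auto)
  also have "\<dots> \<le> (x1 - x2)^2 * exp (2*L+1)"
    using s L_nonneg by (auto simp: Y_initial intro!: mult_left_mono)
  finally show ?thesis .
qed

lemma Y_lipschitz_x:
  assumes "s \<in> {0..1}"
  shows "\<bar>Y s x1 - Y s x2\<bar> \<le> sqrt (exp (2*L+1)) * \<bar>x1 - x2\<bar>"
proof -
  have "sqrt ((Y s x1 - Y s x2)^2) \<le> sqrt ((x1 - x2)^2 * exp (2*L+1))"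
    using Y_diff_square_bound[OF assms] by (rule real_sqrt_le_mono)
  then show ?thesis by (simp add: real_sqrt_mult mult.commute)
qed

lemma Y_lipschitz_s:
  assumes "s \<in> {0..1}" "s' \<in> {0..1}"
  shows "\<bar>Y s' x - Y s x\<bar> \<le> M * \<bar>s' - s\<bar>"
  by (rule lipschitz_from_derivative_bound[OF Y_continuous_s Y_has_derivative_s _ assms])
     (auto intro: h_bound)

lemma Y_continuous: "continuous_on ({0..1} \<times> UNIV) (\<lambda>(s,x). Y s x)"
  unfolding continuous_on_iff
proof (intro ballI allI impI)
  fix p :: "real \<times> real" and e :: real assume p: "p \<in> {0..1} \<times> UNIV" and e: "e > 0"
  obtain s x where px: "p = (s,x)" by (cases p)
  define K where "K = sqrt (exp (2*L+1)) + M + 1"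
  have K: "K > 0" unfolding K_def using M_nonneg real_sqrt_ge_zero[OF exp_ge_zero[of "2*L+1"]] by linarith
  have "dist (Y s' x') (Y s x) < e" if q: "(s',x') \<in> {0..1} \<times> UNIV" "dist (s',x') p < e / K" for s' x'
  proof -
    have s: "s \<in> {0..1}" and s': "s' \<in> {0..1}" using p q px by auto
    have ds: "\<bar>s' - s\<bar> \<le> dist (s',x') p" and dx: "\<bar>x' - x\<bar> \<le> dist (s',x') p"
      using px by (auto simp: dist_Pair_Pair dist_real_def)
    have "\<bar>Y s' x' - Y s' x\<bar> \<le> sqrt (exp (2*L+1)) * dist (s',x') p"
      using Y_lipschitz_x[OF s', of x' x] mult_left_mono[OF dx real_sqrt_ge_zero[OF exp_ge_zero[of "2*L+1"]]] by linarith
    moreover have "\<bar>Y s' x - Y s x\<bar> \<le> M * dist (s',x') p"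
      using Y_lipschitz_s[OF s s', of x] mult_left_mono[OF ds M_nonneg] by linarith
    moreover have "(sqrt (exp (2*L+1)) + M) * dist (s',x') p < e"
    proof -
      have "(sqrt (exp (2*L+1)) + M) * dist (s',x') p \<le> K * dist (s',x') p"
        by (intro mult_right_mono) (unfold K_def, linarith, simp)
      also have "\<dots> < K * (e / K)" using q(2) K by (intro mult_strict_left_mono)
      finally show ?thesis using K by simp
    qed
    ultimately show ?thesis
      unfolding dist_real_def distrib_right by linarith
  qed
  then have "\<forall>q\<in>{0..1} \<times> UNIV. dist q p < e / K \<longrightarrow>
      dist ((\<lambda>(s,x). Y s x) q) ((\<lambda>(s,x). Y s x) p) < e"
    using px by (auto simp: split_beta)
  moreover have "e / K > 0" using e K by simp
  ultimately show "\<exists>d>0. \<forall>q\<in>{0..1} \<times> UNIV. dist q p < d \<longrightarrow>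
      dist ((\<lambda>(s,x). Y s x) q) ((\<lambda>(s,x). Y s x) p) < e"
    by blast
qed

lemma continuous_on_along_Y_joint:
  assumes "continuous_on ({0..1} \<times> UNIV) (\<lambda>(s,y). g s y)"
  shows "continuous_on ({0..1} \<times> UNIV) (\<lambda>(r,x). g r (Y r x))"
proof -
  have "continuous_on ({0..1} \<times> UNIV) ((\<lambda>(s,y). g s y) \<circ> (\<lambda>(r,x). (r, Y r x)))"
  proof (rule continuous_on_compose[OF _ continuous_on_subset[OF assms]])
    show "continuous_on ({0..1} \<times> UNIV) (\<lambda>(r, x). (r, Y r x))"
      using Y_continuous by (auto intro!: continuous_intros simp: split_beta)
  qed auto
  then show ?thesis by (simp add: o_def split_beta)
qed

lemma Y_stationary:
  assumes h0: "\<And>r. r \<in> {0..1} \<Longrightarrow> h r x0 = 0" and s: "s \<in> {0..1}"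
  shows "Y s x0 = x0"
proof -
  have "(Y s x0 - x0)^2 \<le> ((Y 0 x0 - x0)^2 + 0^2 * s) * exp ((2*L+1) * s)"
  proof (rule gronwall_square[where f'="\<lambda>r. h r (Y r x0) - h r x0" and L=L])
    show "continuous_on {0..s} (\<lambda>r. Y r x0 - x0)"
      using s by (auto intro!: continuous_intros intro: continuous_on_subset[OF Y_continuous_s])
    show "((\<lambda>r. Y r x0 - x0) has_real_derivative h r (Y r x0) - h r x0) (at r)"
      if "0 < r" "r < s" for r
      using DERIV_diff[OF Y_has_derivative_s[of r x0] DERIV_const[of x0]] that s h0[of r] by auto
    show "\<bar>h r (Y r x0) - h r x0\<bar> \<le> L * \<bar>Y r x0 - x0\<bar> + 0" if "0 < r" "r < s" for r
      using h_lipschitz[of r] that s by auto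
  qed (use L_nonneg s in auto)
  then show ?thesis by (simp add: Y_initial)
qed

text \<open>\<open>Yx\<close> solves the variational equation \<open>\<partial>\<^sub>s Yx = hy s Y \<cdot> Yx\<close>, \<open>Yx 0 = 1\<close>.\<close>

definition "Yx s x = exp (integral {0..s} (\<lambda>r. hy r (Y r x)))"
definition "Yxx s x = Yx s x * integral {0..s} (\<lambda>r. hyy r (Y r x) * Yx r x)"

lemma Yx_continuous: "continuous_on ({0..1} \<times> UNIV) (\<lambda>(s,x). Yx s x)"
  unfolding Yx_def
  using continuous_on_integral_param[OF continuous_on_along_Y_joint[OF hy_cont]]
  by (auto intro!: continuous_intros simp: split_beta)

lemma Yx_initial: "Yx 0 x = 1"
  by (simp add: Yx_def)

lemma Yx_has_derivative_s:
  assumes "0 < s" "s < 1"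
  shows "((\<lambda>s. Yx s x) has_real_derivative hy s (Y s x) * Yx s x) (at s)"
proof -
  have "((\<lambda>s. Yx s x) has_real_derivative hy s (Y s x) * Yx s x) (at s within {0..1})"
    unfolding Yx_def
    using integral_has_real_derivative[OF continuous_on_along_Y[OF hy_cont], of s] assms
    by (auto intro!: derivative_eq_intros)
  then show ?thesis using assms by (simp add: at_within_Icc_at)
qed

lemma linearized_defect_bound:
  assumes r: "r \<in> {0..1}"
  shows "\<bar>h r (Y r x') - h r (Y r x) - (x' - x) * (hy r (Y r x) * Yx r x)\<bar>
    \<le> L * \<bar>Y r x' - Y r x - (x' - x) * Yx r x\<bar> + L2 * exp (2*L+1) * (x' - x)^2"
proof -
  have "\<bar>h r (Y r x') - h r (Y r x) - hy r (Y r x) * (Y r x' - Y r x)\<bar> \<le> L2 * (Y r x' - Y r x)^2"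
    by (rule h_taylor_bound[OF r])
  also have "\<dots> \<le> L2 * exp (2*L+1) * (x' - x)^2"
    using mult_left_mono[OF Y_diff_square_bound[OF r, of x' x] L2_nonneg] by (simp add: ac_simps)
  finally have "\<bar>h r (Y r x') - h r (Y r x) - hy r (Y r x) * (Y r x' - Y r x)\<bar>
      \<le> L2 * exp (2*L+1) * (x' - x)^2" .
  moreover have "\<bar>hy r (Y r x) * (Y r x' - Y r x - (x' - x) * Yx r x)\<bar>
      \<le> L * \<bar>Y r x' - Y r x - (x' - x) * Yx r x\<bar>"
    using hy_bound[OF r] by (simp add: abs_mult mult_right_mono)
  moreover have "h r (Y r x') - h r (Y r x) - (x' - x) * (hy r (Y r x) * Yx r x)
      = (h r (Y r x') - h r (Y r x) - hy r (Y r x) * (Y r x' - Y r x))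
        + hy r (Y r x) * (Y r x' - Y r x - (x' - x) * Yx r x)"
    by (simp add: algebra_simps)
  ultimately show ?thesis by linarith
qed

lemma Y_linearization_error:
  assumes s: "s \<in> {0..1}"
  shows "\<bar>Y s x' - Y s x - Yx s x * (x' - x)\<bar> \<le> L2 * exp (2*L+1) * sqrt (exp (2*L+1)) * (x' - x)^2"
proof -
  define eps where "eps = L2 * exp (2*L+1) * (x' - x)^2"
  have eps: "eps \<ge> 0" using L2_nonneg by (simp add: eps_def)
  have "(Y s x' - Y s x - (x' - x) * Yx s x)^2
      \<le> ((Y 0 x' - Y 0 x - (x' - x) * Yx 0 x)^2 + eps^2 * s) * exp ((2*L+1) * s)"
  proof (rule gronwall_square[where
        f'="\<lambda>r. h r (Y r x') - h r (Y r x) - (x' - x) * (hy r (Y r x) * Yx r x)" and L=L])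
    show "continuous_on {0..s} (\<lambda>r. Y r x' - Y r x - (x' - x) * Yx r x)"
      using s continuous_on_subset[OF continuous_on_slice[OF Yx_continuous], of "{0..s}"]
        continuous_on_subset[OF Y_continuous_s, of "{0..s}"]
      by (auto intro!: continuous_intros)
    show "((\<lambda>r. Y r x' - Y r x - (x' - x) * Yx r x) has_real_derivative
        h r (Y r x') - h r (Y r x) - (x' - x) * (hy r (Y r x) * Yx r x)) (at r)"
      if "0 < r" "r < s" for r
      using that s by (auto intro!: derivative_eq_intros Y_has_derivative_s Yx_has_derivative_s)
    show "\<bar>h r (Y r x') - h r (Y r x) - (x' - x) * (hy r (Y r x) * Yx r x)\<bar>
        \<le> L * \<bar>Y r x' - Y r x - (x' - x) * Yx r x\<bar> + eps" if "0 < r" "r < s" for r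
      using linearized_defect_bound[of r x' x] that s by (simp add: eps_def)
  qed (use L_nonneg s eps in auto)
  also have "\<dots> = eps^2 * s * exp ((2*L+1) * s)"
    by (simp add: Y_initial Yx_initial)
  also have "\<dots> \<le> eps^2 * exp (2*L+1)"
    using s L_nonneg by (auto intro!: mult_mono simp: mult_left_le)
  finally have "\<bar>Y s x' - Y s x - (x' - x) * Yx s x\<bar> \<le> sqrt (eps^2 * exp (2*L+1))"
    by (metis real_sqrt_abs real_sqrt_le_mono)
  then show ?thesis
    using eps by (simp add: real_sqrt_mult eps_def mult.commute mult.left_commute)
qed

lemma Y_has_derivative_x:
  assumes s: "s \<in> {0..1}"
  shows "((\<lambda>x. Y s x) has_real_derivative Yx s x) (at x)"
  unfolding has_field_derivative_def has_derivative_within_alt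
proof (intro conjI allI impI)
  show "bounded_linear ((*) (Yx s x))" by (rule bounded_linear_mult_right)
  fix e :: real assume e: "e > 0"
  define B where "B = L2 * exp (2*L+1) * sqrt (exp (2*L+1))"
  have B: "B \<ge> 0" using L2_nonneg by (simp add: B_def)
  have "norm (Y s y - Y s x - Yx s x * (y - x)) \<le> e * norm (y - x)"
    if "norm (y - x) < e / (B + 1)" for y
  proof -
    have "B * \<bar>y - x\<bar> \<le> (B + 1) * (e / (B + 1))"
      using that B by (intro mult_mono) auto
    then have "B * \<bar>y - x\<bar> \<le> e" using B by simp
    then have "B * \<bar>y - x\<bar> * \<bar>y - x\<bar> \<le> e * \<bar>y - x\<bar>" by (rule mult_right_mono) simp
    then show ?thesis
      using Y_linearization_error[OF s, of y x]
      by (simp add: B_def power2_eq_square mult.assoc)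
  qed
  moreover have "e / (B + 1) > 0" using e B by simp
  ultimately show "\<exists>d>0. \<forall>y\<in>UNIV. norm (y - x) < d \<longrightarrow>
      norm (Y s y - Y s x - Yx s x * (y - x)) \<le> e * norm (y - x)"
    by blast
qed

lemma Yxx_continuous: "continuous_on ({0..1} \<times> UNIV) (\<lambda>(s,x). Yxx s x)"
proof -
  have "continuous_on ({0..1} \<times> UNIV) (\<lambda>(r,x). hyy r (Y r x) * Yx r x)"
    using continuous_on_along_Y_joint[OF hyy_cont] Yx_continuous
    by (auto intro!: continuous_intros simp: split_beta)
  then show ?thesis
    unfolding Yxx_def using continuous_on_integral_param Yx_continuous
    by (auto intro!: continuous_intros simp: split_beta)
qed

lemma Yx_has_derivative_x:
  assumes s: "s \<in> {0..1}"
  shows "((\<lambda>x. Yx s x) has_real_derivative Yxx s x) (at x)"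
proof -
  have "((\<lambda>x. integral {0..s} (\<lambda>r. hy r (Y r x))) has_real_derivative
      integral {0..s} (\<lambda>r. hyy r (Y r x) * Yx r x)) (at x)"
  proof (rule has_real_derivative_integral_param[OF s])
    show "((\<lambda>x. hy r (Y r x)) has_real_derivative hyy r (Y r x) * Yx r x) (at x)"
      if "r \<in> {0..1}" for r x
      using DERIV_chain2[OF hy_deriv[OF that] Y_has_derivative_x[OF that]] .
    show "continuous_on ({0..1} \<times> UNIV) (\<lambda>(r, x). hyy r (Y r x) * Yx r x)"
      using continuous_on_along_Y_joint[OF hyy_cont] Yx_continuous
      by (auto intro!: continuous_intros simp: split_beta)
  qed (rule continuous_on_along_Y_joint[OF hy_cont])
  then show ?thesis unfolding Yx_def Yxx_def
    by (auto intro!: derivative_eq_intros)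
qed

end

locale ode_integral = ode_initial_dependence +
  fixes k ky kyy F :: "real \<Rightarrow> real \<Rightarrow> real"
  assumes k_deriv: "\<And>s y. s \<in> {0..1} \<Longrightarrow> (k s has_real_derivative ky s y) (at y)"
    and ky_deriv: "\<And>s y. s \<in> {0..1} \<Longrightarrow> (ky s has_real_derivative kyy s y) (at y)"
    and k_cont: "continuous_on ({0..1} \<times> UNIV) (\<lambda>(s,y). k s y)"
    and ky_cont: "continuous_on ({0..1} \<times> UNIV) (\<lambda>(s,y). ky s y)"
    and kyy_cont: "continuous_on ({0..1} \<times> UNIV) (\<lambda>(s,y). kyy s y)"
    and k_along_Y_deriv_s: "\<And>s x. s \<in> {0..1} \<Longrightarrow>
      ((\<lambda>s. k s (Y s x)) has_real_derivative F s x) (at s within {0..1})"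
    and F_cont: "continuous_on ({0..1} \<times> UNIV) (\<lambda>(s,x). F s x)"
begin

definition "T s x = integral {0..s} (\<lambda>r. k r (Y r x))"
definition "Tx s x = integral {0..s} (\<lambda>r. ky r (Y r x) * Yx r x)"
definition "Txx s x = integral {0..s} (\<lambda>r. kyy r (Y r x) * Yx r x * Yx r x + ky r (Y r x) * Yxx r x)"

lemma continuous_on_Tx_integrand:
  "continuous_on ({0..1} \<times> UNIV) (\<lambda>(r,x). ky r (Y r x) * Yx r x)"
  using continuous_on_along_Y_joint[OF ky_cont] Yx_continuous
  by (auto intro!: continuous_intros simp: split_beta)

lemma continuous_on_Txx_integrand:
  "continuous_on ({0..1} \<times> UNIV) (\<lambda>(r,x). kyy r (Y r x) * Yx r x * Yx r x + ky r (Y r x) * Yxx r x)"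
  using continuous_on_along_Y_joint[OF kyy_cont] continuous_on_along_Y_joint[OF ky_cont]
    Yx_continuous Yxx_continuous
  by (auto intro!: continuous_intros simp: split_beta)

lemma k_along_Y_has_derivative_x:
  "r \<in> {0..1} \<Longrightarrow> ((\<lambda>x. k r (Y r x)) has_real_derivative ky r (Y r x) * Yx r x) (at x)"
  using DERIV_chain2[OF k_deriv Y_has_derivative_x] by blast

lemma Tx_integrand_has_derivative_x:
  "r \<in> {0..1} \<Longrightarrow> ((\<lambda>x. ky r (Y r x) * Yx r x) has_real_derivative
     kyy r (Y r x) * Yx r x * Yx r x + ky r (Y r x) * Yxx r x) (at x)"
  using DERIV_mult[OF DERIV_chain2[OF ky_deriv Y_has_derivative_x] Yx_has_derivative_x]
  by (simp add: algebra_simps)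

context
  fixes U :: "real set"
  assumes U: "open U"
begin

lemma T_has_derivative:
  assumes "p \<in> {0..1} \<times> U"
  shows "((\<lambda>(s,x). T s x) has_derivative
      (\<lambda>h. (\<lambda>(s,x). k s (Y s x)) p * fst h + (\<lambda>(s,x). Tx s x) p * snd h)) (at p within {0..1} \<times> U)"
proof (rule has_derivative_of_partials[OF U _ _ _ assms])
  show "((\<lambda>s. (\<lambda>(s,x). T s x) (s, x)) has_real_derivative (\<lambda>(s,x). k s (Y s x)) (s, x))
      (at s within {0..1})" if "s \<in> {0..1}" for s x
    using integral_has_real_derivative[OF continuous_on_along_Y[OF k_cont] that] by (simp add: T_def)
  show "((\<lambda>x. (\<lambda>(s,x). T s x) (s, x)) has_real_derivative (\<lambda>(s,x). Tx s x) (s, x)) (at x)"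
    if "s \<in> {0..1}" for s x
    using has_real_derivative_integral_param[OF that k_along_Y_has_derivative_x
        continuous_on_along_Y_joint[OF k_cont] continuous_on_Tx_integrand]
    by (simp add: T_def Tx_def)
  show "continuous_on ({0..1} \<times> U) (\<lambda>(s,x). Tx s x)"
    unfolding Tx_def
    by (rule continuous_on_subset[OF continuous_on_integral_param[OF continuous_on_Tx_integrand]]) auto
qed

lemma k_along_Y_has_derivative:
  assumes "p \<in> {0..1} \<times> U"
  shows "((\<lambda>(s,x). k s (Y s x)) has_derivative
      (\<lambda>h. (\<lambda>(s,x). F s x) p * fst h + (\<lambda>(s,x). ky s (Y s x) * Yx s x) p * snd h))
      (at p within {0..1} \<times> U)"
proof (rule has_derivative_of_partials[OF U _ _ _ assms])
  show "continuous_on ({0..1} \<times> U) (\<lambda>(s,x). ky s (Y s x) * Yx s x)"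
    by (rule continuous_on_subset[OF continuous_on_Tx_integrand]) auto
qed (simp_all add: k_along_Y_deriv_s k_along_Y_has_derivative_x)

lemma Tx_has_derivative:
  assumes "p \<in> {0..1} \<times> U"
  shows "((\<lambda>(s,x). Tx s x) has_derivative
      (\<lambda>h. (\<lambda>(s,x). ky s (Y s x) * Yx s x) p * fst h + (\<lambda>(s,x). Txx s x) p * snd h))
      (at p within {0..1} \<times> U)"
proof (rule has_derivative_of_partials[OF U _ _ _ assms])
  show "((\<lambda>s. (\<lambda>(s,x). Tx s x) (s, x)) has_real_derivative (\<lambda>(s,x). ky s (Y s x) * Yx s x) (s, x))
      (at s within {0..1})" if "s \<in> {0..1}" for s x
    using integral_has_real_derivative[OF continuous_on_slice[OF continuous_on_Tx_integrand] that]
    by (simp add: Tx_def)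
  show "((\<lambda>x. (\<lambda>(s,x). Tx s x) (s, x)) has_real_derivative (\<lambda>(s,x). Txx s x) (s, x)) (at x)"
    if "s \<in> {0..1}" for s x
    using has_real_derivative_integral_param[OF that Tx_integrand_has_derivative_x
        continuous_on_Tx_integrand continuous_on_Txx_integrand]
    by (simp add: Tx_def Txx_def)
  show "continuous_on ({0..1} \<times> U) (\<lambda>(s,x). Txx s x)"
    unfolding Txx_def
    by (rule continuous_on_subset[OF continuous_on_integral_param[OF continuous_on_Txx_integrand]]) auto
qed

lemma C2_on_T: "C2_on ({0..1} \<times> U) (\<lambda>(s,x). T s x)"
  unfolding C2_on_def
  apply (intro exI conjI ballI)
        apply (erule T_has_derivative)
       apply (erule k_along_Y_has_derivative)
      apply (erule Tx_has_derivative)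
     apply (auto intro: continuous_on_subset[OF F_cont] continuous_on_subset[OF continuous_on_Tx_integrand]
      continuous_on_subset[OF continuous_on_integral_param[OF continuous_on_Txx_integrand]]
      simp: Txx_def)
  done

end

end

definition Q :: "real \<Rightarrow> real" where "Q v = v / (1 + v^2)"
definition Q' :: "real \<Rightarrow> real" where "Q' v = (1 - v^2) / (1 + v^2)^2"
definition Q'' :: "real \<Rightarrow> real" where "Q'' v = (2 * v^3 - 6 * v) / (1 + v^2)^3"
definition R :: "real \<Rightarrow> real" where "R v = 1 / (1 + v^2)"
definition R' :: "real \<Rightarrow> real" where "R' v = - 2 * v / (1 + v^2)^2"
definition R'' :: "real \<Rightarrow> real" where "R'' v = (6 * v^2 - 2) / (1 + v^2)^3"

lemma one_plus_square_nonzero: "1 + (v::real)^2 \<noteq> 0" "1 + v * v \<noteq> 0"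
  using add_pos_nonneg[of 1 "v^2"] by (auto simp: power2_eq_square)

lemma Q_has_derivative: "(Q has_real_derivative Q' v) (at v)"
  unfolding Q_def[abs_def] Q'_def
  by (rule derivative_eq_intros refl | simp add: one_plus_square_nonzero)+
     (simp only: power2_eq_square; simp add: divide_simps one_plus_square_nonzero; algebra)

lemma Q'_has_derivative: "(Q' has_real_derivative Q'' v) (at v)"
  unfolding Q'_def[abs_def] Q''_def
  by (rule derivative_eq_intros refl | simp add: one_plus_square_nonzero)+
     (simp add: divide_simps one_plus_square_nonzero, algebra)

lemma R_has_derivative: "(R has_real_derivative R' v) (at v)"
  unfolding R_def[abs_def] R'_def
  by (rule derivative_eq_intros refl | simp add: one_plus_square_nonzero)+
     (simp only: power2_eq_square; simp add: divide_simps one_plus_square_nonzero; algebra)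

lemma R'_has_derivative: "(R' has_real_derivative R'' v) (at v)"
  unfolding R'_def[abs_def] R''_def
  by (rule derivative_eq_intros refl | simp add: one_plus_square_nonzero)+
     (simp add: divide_simps one_plus_square_nonzero, algebra)

lemma continuous_on_Q_R [continuous_intros]:
  fixes f :: "'a::topological_space \<Rightarrow> real"
  assumes "continuous_on S f"
  shows "continuous_on S (\<lambda>x. Q (f x))" "continuous_on S (\<lambda>x. Q' (f x))"
    "continuous_on S (\<lambda>x. Q'' (f x))" "continuous_on S (\<lambda>x. R (f x))"
    "continuous_on S (\<lambda>x. R' (f x))" "continuous_on S (\<lambda>x. R'' (f x))"
  unfolding Q_def Q'_def Q''_def R_def R'_def R''_def
  using assms by (auto intro!: continuous_intros simp: one_plus_square_nonzero)

locale crossing =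
  fixes w :: "real \<Rightarrow> real" and p :: "real poly" and a b :: real
    and \<xi> \<eta> :: "real \<Rightarrow> real \<Rightarrow> real"
  assumes w_C3: "C3 w"
    and ab: "a < b"
    and p_a: "\<forall>k\<le>3. poly ((pderiv ^^ k) p) a = 0"
    and p_b: "\<forall>k\<le>3. poly ((pderiv ^^ k) p) b = 0"
    and ode_\<xi>: "\<forall>x t. ((\<lambda>t. \<xi> t x) has_real_derivative
        (- deriv w (\<xi> t x) * bump p a b (\<xi> t x)
         - (\<eta> t x - w (\<xi> t x)) * deriv (bump p a b) (\<xi> t x))) (at t)"
    and ode_\<eta>: "\<forall>x t. ((\<lambda>t. \<eta> t x) has_real_derivative bump p a b (\<xi> t x)) (at t)"
    and init: "\<forall>x. \<xi> 0 x = x \<and> \<eta> 0 x = w x"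
begin

text \<open>Because \<open>p\<close> and its first three derivatives vanish at \<open>a\<close> and \<open>b\<close>, \<open>P k\<close> is the \<open>k\<close>-th
  derivative of \<open>\<phi> = bump p a b\<close> for \<open>k \<le> 3\<close>.\<close>

definition P :: "nat \<Rightarrow> real \<Rightarrow> real" where "P k = bump ((pderiv ^^ k) p) a b"
definition W :: "nat \<Rightarrow> real \<Rightarrow> real" where "W k = (deriv ^^ k) w"

lemma P_has_derivative:
  assumes "k < 3"
  shows "(P k has_real_derivative P (Suc k) y) (at y)"
proof -
  have "poly ((pderiv ^^ j) p) a = 0" "poly ((pderiv ^^ j) p) b = 0" if "j \<le> Suc k" for j
    using p_a p_b that assms by auto
  from this[of k] this[of "Suc k"] show ?thesis
    using bump_has_real_derivative[OF ab, of "(pderiv ^^ k) p"] by (simp add: P_def)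
qed

lemma W_has_derivative:
  assumes "k < 3"
  shows "(W k has_real_derivative W (Suc k) y) (at y)"
  using w_C3 assms unfolding C3_def W_def
  by (simp add: DERIV_deriv_iff_real_differentiable)

lemma P_continuous: "k \<le> 3 \<Longrightarrow> continuous_on UNIV (P k)"
  unfolding P_def using p_a p_b by (intro bump_continuous[OF ab]) auto

lemma W_continuous:
  assumes "k \<le> 3"
  shows "continuous_on UNIV (W k)"
proof (cases "k = 3")
  case False
  with assms W_has_derivative[of k] show ?thesis
    by (auto intro!: continuous_at_imp_continuous_on DERIV_isCont)
qed (use w_C3 in \<open>simp add: C3_def W_def\<close>)

lemma continuous_on_P_W [continuous_intros]:
  "continuous_on S f \<Longrightarrow> k \<le> 3 \<Longrightarrow> continuous_on S (\<lambda>x. P k (f x))"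
  "continuous_on S f \<Longrightarrow> k \<le> 3 \<Longrightarrow> continuous_on S (\<lambda>x. W k (f x))"
  by (auto intro: continuous_on_compose2[OF P_continuous] continuous_on_compose2[OF W_continuous])

lemma P_outside: "y \<notin> {a..b} \<Longrightarrow> P k y = 0"
  by (auto simp: P_def bump_def)

lemma P_derivs:
  "(P 0 has_real_derivative P 1 y) (at y)" "(P 1 has_real_derivative P 2 y) (at y)"
  "(P 2 has_real_derivative P 3 y) (at y)"
  using P_has_derivative[of 0 y] P_has_derivative[of 1 y] P_has_derivative[of 2 y]
  by (simp_all add: eval_nat_numeral)

lemma W_derivs:
  "(W 0 has_real_derivative W 1 y) (at y)" "(W 1 has_real_derivative W 2 y) (at y)"
  "(W 2 has_real_derivative W 3 y) (at y)"
  using W_has_derivative[of 0 y] W_has_derivative[of 1 y] W_has_derivative[of 2 y]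
  by (simp_all add: eval_nat_numeral)

lemma bump_eq_P: "bump p a b = P 0" and deriv_P: "deriv (P 0) = P 1"
  and deriv_w_eq_W: "deriv w = W 1" and W_0: "W 0 = w"
  using P_derivs(1) by (auto simp: P_def W_def intro!: ext DERIV_imp_deriv)

text \<open>With \<open>z s y = w' y + s \<phi>' y\<close> the slope of the graph of \<open>w + s \<phi>\<close>, the point
  \<open>Y s = \<xi> (t\<^sub>0 s) x\<close> where the trajectory first meets that graph moves by \<open>\<partial>\<^sub>s Y = h s Y\<close>,
  and \<open>\<partial>\<^sub>s t\<^sub>0 = k s Y\<close>; \<open>hy, hyy, ky, kyy\<close> are the \<open>y\<close>-derivatives.\<close>

definition "z s y = W 1 y + s * P 1 y"
definition "zy s y = W 2 y + s * P 2 y"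
definition "zyy s y = W 3 y + s * P 3 y"
definition "h s y = - (P 0 y * Q (z s y))"
definition "hy s y = - (P 1 y * Q (z s y) + P 0 y * (Q' (z s y) * zy s y))"
definition "hyy s y = - (P 2 y * Q (z s y) + 2 * P 1 y * (Q' (z s y) * zy s y)
     + P 0 y * (Q'' (z s y) * zy s y * zy s y + Q' (z s y) * zyy s y))"
definition "k s y = R (z s y)"
definition "ky s y = R' (z s y) * zy s y"
definition "kyy s y = R'' (z s y) * zy s y * zy s y + R' (z s y) * zyy s y"

lemma z_has_derivative: "(z s has_real_derivative zy s y) (at y)"
  using DERIV_add[OF W_derivs(2) DERIV_cmult[OF P_derivs(2), of s]] by (simp add: z_def[abs_def] zy_def)

lemma zy_has_derivative: "(zy s has_real_derivative zyy s y) (at y)"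
  using DERIV_add[OF W_derivs(3) DERIV_cmult[OF P_derivs(3), of s]] by (simp add: zy_def[abs_def] zyy_def)

lemma h_has_derivative: "(h s has_real_derivative hy s y) (at y)"
  using DERIV_minus[OF DERIV_mult[OF P_derivs(1) DERIV_chain2[OF Q_has_derivative z_has_derivative[of s]]]]
  by (simp add: h_def[abs_def] hy_def algebra_simps)

lemma hy_has_derivative: "(hy s has_real_derivative hyy s y) (at y)"
proof -
  have "((\<lambda>y. Q' (z s y) * zy s y) has_real_derivative
      Q'' (z s y) * zy s y * zy s y + Q' (z s y) * zyy s y) (at y)"
    using DERIV_mult[OF DERIV_chain2[OF Q'_has_derivative z_has_derivative[of s]] zy_has_derivative]
    by (simp add: algebra_simps)
  from DERIV_minus[OF DERIV_add[OF
        DERIV_mult[OF P_derivs(2) DERIV_chain2[OF Q_has_derivative z_has_derivative[of s]]]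
        DERIV_mult[OF P_derivs(1) this]]]
  show ?thesis by (simp add: hy_def[abs_def] hyy_def algebra_simps)
qed

lemma k_has_derivative: "(k s has_real_derivative ky s y) (at y)"
  unfolding k_def[abs_def] ky_def using DERIV_chain2[OF R_has_derivative z_has_derivative[of s]] by simp

lemma ky_has_derivative: "(ky s has_real_derivative kyy s y) (at y)"
  unfolding ky_def[abs_def] kyy_def
  using DERIV_mult[OF DERIV_chain2[OF R'_has_derivative z_has_derivative[of s]] zy_has_derivative]
  by (simp add: algebra_simps)

lemma h_k_continuous:
  "continuous_on ({0..1} \<times> UNIV) (\<lambda>(s,y). h s y)"
  "continuous_on ({0..1} \<times> UNIV) (\<lambda>(s,y). hy s y)"
  "continuous_on ({0..1} \<times> UNIV) (\<lambda>(s,y). hyy s y)"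
  "continuous_on ({0..1} \<times> UNIV) (\<lambda>(s,y). k s y)"
  "continuous_on ({0..1} \<times> UNIV) (\<lambda>(s,y). ky s y)"
  "continuous_on ({0..1} \<times> UNIV) (\<lambda>(s,y). kyy s y)"
  unfolding h_def hy_def hyy_def k_def ky_def kyy_def z_def zy_def zyy_def split_beta
  by (auto intro!: continuous_intros)

lemma h_bounds: "\<exists>M L L2. \<forall>s\<in>{0..1}. \<forall>y. \<bar>h s y\<bar> \<le> M \<and> \<bar>hy s y\<bar> \<le> L \<and> \<bar>hyy s y\<bar> \<le> L2"
proof -
  have "y \<notin> {a..b} \<Longrightarrow> h s y = 0 \<and> hy s y = 0 \<and> hyy s y = 0" for s y
    by (simp add: h_def hy_def hyy_def P_outside)
  then obtain M L L2 where "\<forall>s\<in>{0..1}. \<forall>y. \<bar>h s y\<bar> \<le> M"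
      "\<forall>s\<in>{0..1}. \<forall>y. \<bar>hy s y\<bar> \<le> L" "\<forall>s\<in>{0..1}. \<forall>y. \<bar>hyy s y\<bar> \<le> L2"
    using bounded_if_vanishing_outside[OF h_k_continuous(1)] bounded_if_vanishing_outside[OF h_k_continuous(2)]
      bounded_if_vanishing_outside[OF h_k_continuous(3)]
    by (metis compact_Icc)
  then show ?thesis by blast
qed

lemma k_along_has_derivative:
  assumes "(g has_real_derivative g') (at s within S)"
  shows "((\<lambda>s. k s (g s)) has_real_derivative R' (z s (g s)) * (zy s (g s) * g' + P 1 (g s)))
    (at s within S)"
proof -
  have "((\<lambda>s. z s (g s)) has_real_derivative zy s (g s) * g' + P 1 (g s)) (at s within S)"
    unfolding z_def zy_def
    using DERIV_chain2[OF W_derivs(2) assms] DERIV_chain2[OF P_derivs(2) assms]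
    by (auto intro!: derivative_eq_intros simp: algebra_simps)
  from DERIV_chain2[OF R_has_derivative this] show ?thesis by (simp add: k_def)
qed

text \<open>\<open>level x t\<close> is the \<open>s\<close> for which the point at time \<open>t\<close> lies on the graph of \<open>w + s \<phi>\<close>;
  it is only meaningful while \<open>\<phi> (\<xi> t x) \<noteq> 0\<close>.\<close>

definition "height x t = \<eta> t x - w (\<xi> t x)"
definition "level x t = height x t / P 0 (\<xi> t x)"
definition "nonvanishing_upto x t \<longleftrightarrow> (\<forall>r\<in>{0..t}. P 0 (\<xi> r x) \<noteq> 0)"

lemma xi_has_derivative:
  "((\<lambda>t. \<xi> t x) has_real_derivative - W 1 (\<xi> t x) * P 0 (\<xi> t x) - height x t * P 1 (\<xi> t x)) (at t)"
  using ode_\<xi> unfolding bump_eq_P deriv_P deriv_w_eq_W height_def by blast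

lemma height_has_derivative:
  "((\<lambda>t. height x t) has_real_derivative
    P 0 (\<xi> t x) - W 1 (\<xi> t x) * (- W 1 (\<xi> t x) * P 0 (\<xi> t x) - height x t * P 1 (\<xi> t x))) (at t)"
  using DERIV_diff[OF ode_\<eta>[rule_format, of x t] DERIV_chain2[OF W_derivs(1) xi_has_derivative]]
  unfolding height_def bump_eq_P W_0 .

lemma xi_continuous: "continuous_on S (\<lambda>t. \<xi> t x)"
  using xi_has_derivative by (auto intro!: continuous_at_imp_continuous_on DERIV_isCont)

lemma height_continuous: "continuous_on S (\<lambda>t. height x t)"
  using height_has_derivative by (auto intro!: continuous_at_imp_continuous_on DERIV_isCont)

lemma level_has_derivative:
  assumes nz: "P 0 (\<xi> t x) \<noteq> 0"
  shows "((\<lambda>t. level x t) has_real_derivative 1 + (z (level x t) (\<xi> t x))^2) (at t)"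
proof -
  have alg: "((A - c*(-c*A - u*d))*A - u*(d*(-c*A - u*d)))/(A*A) = 1 + (c + u/A*d)^2"
    if "A \<noteq> 0" for A c u d :: real
    using that by (simp add: divide_simps power2_eq_square) algebra
  have "((\<lambda>t. height x t / P 0 (\<xi> t x)) has_real_derivative
     ((P 0 (\<xi> t x) - W 1 (\<xi> t x) * (- W 1 (\<xi> t x) * P 0 (\<xi> t x) - height x t * P 1 (\<xi> t x))) * P 0 (\<xi> t x)
       - height x t * (P 1 (\<xi> t x) * (- W 1 (\<xi> t x) * P 0 (\<xi> t x) - height x t * P 1 (\<xi> t x))))
     / (P 0 (\<xi> t x) * P 0 (\<xi> t x))) (at t)"
    using DERIV_divide[OF height_has_derivative DERIV_chain2[OF P_derivs(1) xi_has_derivative] nz] .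
  then show ?thesis
    unfolding alg[OF nz] by (simp add: level_def[abs_def] z_def)
qed

lemma level_initial: "level x 0 = 0"
  using init by (simp add: level_def height_def)

lemma nonvanishing_upto_0: "P 0 x \<noteq> 0 \<Longrightarrow> nonvanishing_upto x 0"
  using init by (simp add: nonvanishing_upto_def)

lemma nonvanishing_upto_mono: "nonvanishing_upto x t \<Longrightarrow> t' \<le> t \<Longrightarrow> nonvanishing_upto x t'"
  by (auto simp: nonvanishing_upto_def)

lemma level_continuous:
  assumes "nonvanishing_upto x t"
  shows "continuous_on {0..t} (\<lambda>r. level x r)"
  using assms level_has_derivative
  by (auto simp: nonvanishing_upto_def intro!: continuous_at_imp_continuous_on DERIV_isCont)

lemma level_increment:
  assumes "0 \<le> t1" "t1 \<le> t2" "nonvanishing_upto x t2"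
  shows "level x t2 - level x t1 \<ge> t2 - t1"
proof -
  have "level x t1 - t1 \<le> level x t2 - t2"
  proof (rule deriv_nonneg_imp_mono[where g="\<lambda>r. level x r - r" and g'="\<lambda>r. (z (level x r) (\<xi> r x))^2"])
    fix r assume "r \<in> {t1..t2}"
    then have "P 0 (\<xi> r x) \<noteq> 0" using assms by (auto simp: nonvanishing_upto_def)
    from DERIV_diff[OF level_has_derivative[OF this] DERIV_ident]
    show "((\<lambda>r. level x r - r) has_real_derivative (z (level x r) (\<xi> r x))^2) (at r)" by simp
  qed (use assms in auto)
  then show ?thesis by simp
qed

lemma level_ge: "nonvanishing_upto x t \<Longrightarrow> 0 \<le> t \<Longrightarrow> level x t \<ge> t"
  using level_increment[of 0 t x] level_initial by simp

lemma level_inj: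
  assumes "0 \<le> t1" "0 \<le> t2" "nonvanishing_upto x t1" "nonvanishing_upto x t2" "level x t1 = level x t2"
  shows "t1 = t2"
proof (cases "t1 \<le> t2")
  case True
  then show ?thesis using level_increment[OF assms(1) True assms(4)] assms(5) by linarith
next
  case False
  then have "t2 \<le> t1" by simp
  then show ?thesis using level_increment[OF assms(2) _ assms(3)] assms(5) by linarith
qed

lemma height_eq_level: "P 0 (\<xi> t x) \<noteq> 0 \<Longrightarrow> height x t = level x t * P 0 (\<xi> t x)"
  by (simp add: level_def)

lemma P0_xi_has_derivative:
  assumes "P 0 (\<xi> t x) \<noteq> 0"
  shows "((\<lambda>t. P 0 (\<xi> t x)) has_real_derivative
    - P 0 (\<xi> t x) * (P 1 (\<xi> t x) * z (level x t) (\<xi> t x))) (at t)"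
  using DERIV_chain2[OF P_derivs(1) xi_has_derivative[of x t]] height_eq_level[OF assms]
  by (simp add: z_def algebra_simps)

text \<open>While the level stays in \<open>[0,1]\<close> the logarithmic derivative of \<open>\<phi> (\<xi> t x)\<close> is bounded,
  so \<open>\<phi> (\<xi> t x)\<^sup>2 e\<^sup>2\<^sup>R\<^sup>t\<close> cannot decrease and the trajectory cannot leave the support of \<open>\<phi>\<close>.\<close>

lemma P0_xi_nonzero:
  assumes x: "P 0 x \<noteq> 0" and t: "0 \<le> t"
    and before: "\<And>r. 0 \<le> r \<Longrightarrow> r < t \<Longrightarrow> P 0 (\<xi> r x) \<noteq> 0 \<and> level x r \<in> {0..1}"
  shows "P 0 (\<xi> t x) \<noteq> 0"
proof -
  have "continuous_on ({0..1} \<times> UNIV) (\<lambda>(s,y). P 1 y * z s y)"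
    unfolding z_def by (auto intro!: continuous_intros simp: split_beta)
  moreover have "\<And>s y. y \<notin> {a..b} \<Longrightarrow> P 1 y * z s y = 0" by (simp add: P_outside)
  ultimately obtain K where K: "\<forall>s\<in>{0..1}. \<forall>y. \<bar>P 1 y * z s y\<bar> \<le> K"
    using bounded_if_vanishing_outside[OF _ compact_Icc compact_Icc] by blast
  define G where "G r = P 0 (\<xi> r x) * P 0 (\<xi> r x) * exp (2 * K * r)" for r
  have "G 0 \<le> G t"
  proof (rule DERIV_nonneg_imp_increasing_open[OF t])
    show "continuous_on {0..t} G" unfolding G_def[abs_def]
      using xi_continuous by (auto intro!: continuous_intros)
  next
    fix r assume r: "0 < r" "r < t"
    define Pr where "Pr = P 0 (\<xi> r x)"
    define D where "D = P 1 (\<xi> r x) * z (level x r) (\<xi> r x)"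
    have dP: "((\<lambda>t. P 0 (\<xi> t x)) has_real_derivative - Pr * D) (at r)"
      using P0_xi_has_derivative[of r x] before[of r] r by (simp add: Pr_def D_def)
    have "(G has_real_derivative Pr * Pr * (2 * (K - D) * exp (2 * K * r))) (at r)"
      unfolding G_def[abs_def]
      by (rule derivative_eq_intros dP refl | simp add: Pr_def algebra_simps)+
    moreover have "\<bar>D\<bar> \<le> K" using K before[of r] r by (simp add: D_def)
    then have "D \<le> K" by simp
    then have "0 \<le> Pr * Pr * (2 * (K - D) * exp (2 * K * r))"
      by (intro mult_nonneg_nonneg[OF zero_le_square]) auto
    ultimately show "\<exists>y. (G has_real_derivative y) (at r) \<and> 0 \<le> y" by blast
  qed
  moreover have "0 < P 0 x * P 0 x" using x not_real_square_gt_zero by metis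
  then have "G 0 > 0" using init by (simp add: G_def)
  ultimately show ?thesis by (auto simp: G_def)
qed
lemma level_reaches_or_leaves:
  assumes x: "P 0 x \<noteq> 0" and s: "s \<in> {0..1}"
  shows "\<exists>t\<in>{0..1}. P 0 (\<xi> t x) = 0 \<or> (nonvanishing_upto x t \<and> level x t = s)"
proof (cases "nonvanishing_upto x 1")
  case True
  then obtain t where "0 \<le> t" "t \<le> 1" "level x t = s"
    using IVT'[of "level x" 0 s 1] level_continuous[OF True] level_initial level_ge[OF True] s
    by auto
  then show ?thesis using nonvanishing_upto_mono[OF True] by auto
qed (auto simp: nonvanishing_upto_def)

lemma level_below:
  assumes nv: "nonvanishing_upto x r" and r: "0 \<le> r" and s: "0 \<le> s"
    and miss: "\<And>r'. r' \<in> {0..r} \<Longrightarrow> level x r' \<noteq> s"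
  shows "0 \<le> level x r \<and> level x r < s"
proof
  show "0 \<le> level x r" using level_ge[OF nv r] r by linarith
  show "level x r < s"
  proof (rule ccontr)
    assume "\<not> level x r < s"
    then obtain r' where "0 \<le> r'" "r' \<le> r" "level x r' = s"
      using IVT'[of "level x" 0 s r] level_continuous[OF nv] level_initial s r by auto
    then show False using miss by auto
  qed
qed

lemma first_hit_exists:
  assumes x: "P 0 x \<noteq> 0" and s: "s \<in> {0..1}"
  shows "\<exists>t. 0 \<le> t \<and> t \<le> s \<and> nonvanishing_upto x t \<and> level x t = s"
proof (cases "s = 0")
  case True
  then show ?thesis using nonvanishing_upto_0[OF x] level_initial by auto
next
  case False
  then have spos: "s > 0" using s by auto
  \<comment> \<open>a zero of \<open>\<phi> (\<xi> t x) \<cdot> g t\<close> means leaving the support of \<open>\<phi>\<close> or reaching level \<open>s\<close>\<close>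
  define g where "g t = height x t - s * P 0 (\<xi> t x)" for t
  have g_iff: "g t = 0 \<longleftrightarrow> level x t = s" if "P 0 (\<xi> t x) \<noteq> 0" for t
    using that by (auto simp: g_def level_def field_simps)
  define Z where "Z = {0..1} \<inter> {t. P 0 (\<xi> t x) * g t = 0}"
  have "Z \<noteq> {}"
    using level_reaches_or_leaves[OF x s] g_iff by (force simp: Z_def nonvanishing_upto_def)
  moreover have Zbdd: "bdd_below Z" by (rule bdd_belowI[of _ 0]) (auto simp: Z_def)
  moreover have "closed Z"
    unfolding Z_def g_def using xi_continuous height_continuous
    by (intro closed_Int closed_Collect_eq) (auto intro!: continuous_intros)
  ultimately have t'Z: "Inf Z \<in> Z" by (rule closed_contains_Inf)
  define t' where "t' = Inf Z"
  have t'01: "0 \<le> t'" "t' \<le> 1" using t'Z by (auto simp: Z_def t'_def)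
  have before: "P 0 (\<xi> r x) \<noteq> 0 \<and> g r \<noteq> 0" if "0 \<le> r" "r < t'" for r
    using cInf_lower[OF _ Zbdd, of r] that t'01 by (force simp: Z_def t'_def)
  have nv_before: "nonvanishing_upto x r" if "0 \<le> r" "r < t'" for r
    using before that by (auto simp: nonvanishing_upto_def)
  have level_before: "0 \<le> level x r \<and> level x r < s" if "0 \<le> r" "r < t'" for r
  proof (rule level_below[OF nv_before[OF that] that(1)])
    show "level x r' \<noteq> s" if "r' \<in> {0..r}" for r'
      using before[of r'] g_iff[of r'] that \<open>r < t'\<close> by auto
  qed (use spos in simp)
  have nz: "P 0 (\<xi> t' x) \<noteq> 0"
  proof (rule P0_xi_nonzero[OF x t'01(1)])
    fix r assume "0 \<le> r" "r < t'"
    then show "P 0 (\<xi> r x) \<noteq> 0 \<and> level x r \<in> {0..1}"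
      using before[of r] level_before[of r] s by auto
  qed
  then have "level x t' = s" using t'Z g_iff by (auto simp: Z_def t'_def)
  moreover have "nonvanishing_upto x t'"
    using before nz by (auto simp: nonvanishing_upto_def le_less)
  ultimately show ?thesis using level_ge t'01 by fastforce
qed

definition "first_hit x s = (THE t. 0 \<le> t \<and> t \<le> s \<and> nonvanishing_upto x t \<and> level x t = s)"

lemma first_hit:
  assumes "P 0 x \<noteq> 0" "s \<in> {0..1}"
  shows "0 \<le> first_hit x s \<and> first_hit x s \<le> s \<and> nonvanishing_upto x (first_hit x s)
    \<and> level x (first_hit x s) = s"
proof -
  have "\<exists>!t. 0 \<le> t \<and> t \<le> s \<and> nonvanishing_upto x t \<and> level x t = s"
    using first_hit_exists[OF assms] level_inj by blast
  then show ?thesis unfolding first_hit_def by (rule theI')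
qed

lemma first_hit_0: "P 0 x \<noteq> 0 \<Longrightarrow> first_hit x 0 = 0"
  using first_hit[of x 0] by auto

lemma P0_first_hit_nonzero:
  "P 0 x \<noteq> 0 \<Longrightarrow> s \<in> {0..1} \<Longrightarrow> P 0 (\<xi> (first_hit x s) x) \<noteq> 0"
  using first_hit[of x s] by (auto simp: nonvanishing_upto_def)

lemma first_hit_lipschitz:
  assumes x: "P 0 x \<noteq> 0"
  shows "lipschitz_on 1 {0..1} (first_hit x)"
proof (rule lipschitz_onI)
  fix s1 s2 :: real assume s: "s1 \<in> {0..1}" "s2 \<in> {0..1}"
  show "dist (first_hit x s1) (first_hit x s2) \<le> 1 * dist s1 s2"
    using level_increment[of "first_hit x s1" "first_hit x s2" x]
      level_increment[of "first_hit x s2" "first_hit x s1" x] first_hit[OF x s(1)] first_hit[OF x s(2)]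
    by (cases "first_hit x s1 \<le> first_hit x s2") (auto simp: dist_real_def)
qed simp

lemma first_hit_continuous: "P 0 x \<noteq> 0 \<Longrightarrow> continuous_on {0..1} (first_hit x)"
  by (rule lipschitz_on_continuous_on[OF first_hit_lipschitz])

text \<open>Off the support of \<open>\<phi>\<close> the hitting point is taken to be \<open>x\<close> itself, so that
  \<open>hit_point\<close> solves the \<open>s\<close>-evolution \<open>\<partial>\<^sub>s Y = h s Y\<close> for every initial point.\<close>

definition "hit_point s x = (if P 0 x = 0 then x else \<xi> (first_hit x s) x)"

lemma first_hit_has_derivative:
  assumes x: "P 0 x \<noteq> 0" and s: "0 < s" "s < 1"
  shows "(first_hit x has_real_derivative k s (hit_point s x)) (at s)"
proof -
  have s01: "s \<in> {0..1}" using s by auto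
  have "(first_hit x has_real_derivative inverse (1 + (z s (\<xi> (first_hit x s) x))^2)) (at s)"
  proof (rule DERIV_inverse_function[where f="level x" and a=0 and b=1])
    show "(level x has_real_derivative 1 + (z s (\<xi> (first_hit x s) x))^2) (at (first_hit x s))"
      using level_has_derivative[OF P0_first_hit_nonzero[OF x s01]] first_hit[OF x s01] by simp
    show "level x (first_hit x y) = y" if "0 < y" "y < 1" for y
      using first_hit[OF x, of y] that by auto
    show "isCont (first_hit x) s"
      using continuous_on_interior[OF first_hit_continuous[OF x], of s] s by auto
  qed (use s one_plus_square_nonzero in auto)
  then show ?thesis using x by (simp add: k_def R_def hit_point_def inverse_eq_divide)
qed

lemma hit_point_has_derivative:
  assumes x: "P 0 x \<noteq> 0" and s: "0 < s" "s < 1"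
  shows "((\<lambda>s. hit_point s x) has_real_derivative h s (hit_point s x)) (at s)"
proof -
  have s01: "s \<in> {0..1}" using s by auto
  let ?t = "first_hit x s"
  have nz: "P 0 (\<xi> ?t x) \<noteq> 0" by (rule P0_first_hit_nonzero[OF x s01])
  have "height x ?t = s * P 0 (\<xi> ?t x)"
    using height_eq_level[OF nz] first_hit[OF x s01] by simp
  then have "(- W 1 (\<xi> ?t x) * P 0 (\<xi> ?t x) - height x ?t * P 1 (\<xi> ?t x)) * k s (hit_point s x)
      = h s (hit_point s x)"
    using x by (simp add: hit_point_def k_def h_def Q_def R_def z_def algebra_simps add_divide_distrib)
  with DERIV_chain2[OF xi_has_derivative[of x] first_hit_has_derivative[OF x s]]
  show ?thesis using x by (simp add: hit_point_def)
qed

lemma hit_point_continuous: "continuous_on {0..1} (\<lambda>s. hit_point s x)"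
proof (cases "P 0 x = 0")
  case False
  then show ?thesis
    using continuous_on_compose2[OF xi_continuous[of UNIV x] first_hit_continuous[OF False]]
    by (simp add: hit_point_def)
qed (simp add: hit_point_def)

lemma hit_point_integral_eq:
  assumes s: "s \<in> {0..1}"
  shows "hit_point s x = x + integral {0..s} (\<lambda>r. h r (hit_point r x))"
proof (cases "P 0 x = 0")
  case True
  then show ?thesis by (simp add: hit_point_def h_def)
next
  case False
  have "hit_point s x = hit_point 0 x + integral {0..s} (\<lambda>r. h r (hit_point r x))"
    by (rule integral_of_interior_derivative)
       (use s hit_point_has_derivative[OF False] continuous_on_subset[OF hit_point_continuous]
         in auto)
  then show ?thesis using False first_hit_0[OF False] init by (simp add: hit_point_def)
qed

lemma first_hit_integral_eq:
  assumes x: "P 0 x \<noteq> 0" and s: "s \<in> {0..1}"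
  shows "first_hit x s = integral {0..s} (\<lambda>r. k r (hit_point r x))"
  using integral_of_interior_derivative[of s "first_hit x"] first_hit_has_derivative[OF x]
    continuous_on_subset[OF first_hit_continuous[OF x]] first_hit_0[OF x] s
  by auto

lemma first_hit_on_graph:
  assumes "P 0 x \<noteq> 0" "s \<in> {0..1}"
  shows "\<eta> (first_hit x s) x = w (\<xi> (first_hit x s) x) + s * P 0 (\<xi> (first_hit x s) x)"
  using height_eq_level[OF P0_first_hit_nonzero[OF assms]] first_hit[OF assms]
  by (simp add: height_def)

lemma first_hit_is_first:
  assumes x: "P 0 x \<noteq> 0" and s: "s \<in> {0..1}" and t: "0 \<le> t" "t < first_hit x s"
  shows "\<eta> t x \<noteq> w (\<xi> t x) + s * P 0 (\<xi> t x)"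
proof
  assume on_graph: "\<eta> t x = w (\<xi> t x) + s * P 0 (\<xi> t x)"
  have nv: "nonvanishing_upto x t"
    using nonvanishing_upto_mono t first_hit[OF x s] by auto
  then have "P 0 (\<xi> t x) \<noteq> 0" using t by (auto simp: nonvanishing_upto_def)
  then have "level x t = level x (first_hit x s)"
    using on_graph first_hit[OF x s] by (simp add: level_def height_def)
  moreover have "0 \<le> first_hit x s" "nonvanishing_upto x (first_hit x s)"
    using first_hit[OF x s] by auto
  ultimately have "t = first_hit x s" using level_inj[OF t(1) _ nv] by blast
  then show False using t by simp
qed

lemma sign_preserved_until_first_hit:
  assumes x: "P 0 x \<noteq> 0" and s: "s \<in> {0..1}" and t: "t \<in> {0..first_hit x s}"
  shows "P 0 (\<xi> t x) * P 0 x > 0"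
proof (rule ccontr)
  assume "\<not> P 0 (\<xi> t x) * P 0 x > 0"
  then have "P 0 (\<xi> t x) * P 0 x \<le> 0" by simp
  moreover have "continuous_on {0..t} (\<lambda>r. P 0 (\<xi> r x) * P 0 x)"
    using xi_continuous by (auto intro!: continuous_intros)
  moreover have "P 0 (\<xi> 0 x) * P 0 x > 0"
    using x init not_real_square_gt_zero by metis
  ultimately obtain r where "0 \<le> r" "r \<le> t" "P 0 (\<xi> r x) * P 0 x = 0"
    using IVT2'[of "\<lambda>r. P 0 (\<xi> r x) * P 0 x" t 0 0] t by auto
  then show False
    using first_hit[OF x s] t x by (auto simp: nonvanishing_upto_def)
qed

definition "k_along_deriv s x =
  R' (z s (hit_point s x)) * (zy s (hit_point s x) * h s (hit_point s x) + P 1 (hit_point s x))"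

lemma hit_point_ode: "\<exists>M L L2. ode_integral h hy hyy hit_point L L2 M k ky kyy k_along_deriv"
proof -
  obtain M L L2 where bd: "\<forall>s\<in>{0..1}. \<forall>y. \<bar>h s y\<bar> \<le> M \<and> \<bar>hy s y\<bar> \<le> L \<and> \<bar>hyy s y\<bar> \<le> L2"
    using h_bounds by blast
  interpret O: ode_initial_dependence h hy hyy hit_point L L2 M
    by unfold_locales
      (use h_has_derivative hy_has_derivative h_k_continuous bd hit_point_integral_eq
         hit_point_continuous in auto)
  have "ode_integral h hy hyy hit_point L L2 M k ky kyy k_along_deriv"
  proof unfold_locales
    show "((\<lambda>s. k s (hit_point s x)) has_real_derivative k_along_deriv s x) (at s within {0..1})"
      if "s \<in> {0..1}" for s x
      using k_along_has_derivative[OF O.Y_has_derivative_s_within[OF that]] by (simp add: k_along_deriv_def)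
    have "continuous_on ({0..1} \<times> UNIV) (\<lambda>(s,y). R' (z s y) * (zy s y * h s y + P 1 y))"
      unfolding z_def zy_def h_def split_beta by (auto intro!: continuous_intros)
    then show "continuous_on ({0..1} \<times> UNIV) (\<lambda>(s, x). k_along_deriv s x)"
      unfolding k_along_deriv_def by (rule O.continuous_on_along_Y_joint)
  qed (use k_has_derivative ky_has_derivative h_k_continuous in auto)
  then show ?thesis by blast
qed

lemma first_hit_C2: "C2_on ({0..1} \<times> {x. P 0 x \<noteq> 0}) (\<lambda>(s,x). first_hit x s)"
proof -
  obtain M L L2 where "ode_integral h hy hyy hit_point L L2 M k ky kyy k_along_deriv"
    using hit_point_ode by blast
  then interpret O: ode_integral h hy hyy hit_point L L2 M k ky kyy k_along_deriv .
  have "open {x. P 0 x \<noteq> 0}"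
    by (rule open_Collect_neq[OF P_continuous continuous_on_const]) simp
  from O.C2_on_T[OF this] show ?thesis
    by (rule C2_on_cong) (auto simp: O.T_def first_hit_integral_eq)
qed

lemma first_hit_stationary:
  assumes x: "P 0 x \<noteq> 0" and "P 1 x = 0" "W 1 x = 0" and s: "s \<in> {0..1}"
  shows "first_hit x s = s"
proof -
  have crit: "P (Suc 0) x = 0" "W (Suc 0) x = 0" using assms(2,3) by (simp_all add: One_nat_def)
  obtain M L L2 where "ode_integral h hy hyy hit_point L L2 M k ky kyy k_along_deriv"
    using hit_point_ode by blast
  then interpret O: ode_integral h hy hyy hit_point L L2 M k ky kyy k_along_deriv .
  have "k r (hit_point r x) = 1" if "r \<in> {0..s}" for r
  proof -
    have "hit_point r x = x"
      by (rule O.Y_stationary) (use that s in \<open>auto simp: h_def z_def Q_def crit\<close>)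
    then show ?thesis by (simp add: k_def z_def R_def crit)
  qed
  then have "first_hit x s = integral {0..s} (\<lambda>r. 1)"
    unfolding first_hit_integral_eq[OF x s] by (rule integral_cong)
  then show ?thesis using s by simp
qed

definition "hit_time s x = (if P 0 x = 0 then 0 else first_hit x s)"

lemma hit_time_properties:
  assumes s: "s \<in> {0..1}"
  shows "hit_time s x \<ge> 0
     \<and> \<eta> (hit_time s x) x = w (\<xi> (hit_time s x) x) + s * P 0 (\<xi> (hit_time s x) x)
     \<and> (\<forall>t. 0 \<le> t \<and> t < hit_time s x \<longrightarrow> \<eta> t x \<noteq> w (\<xi> t x) + s * P 0 (\<xi> t x))
     \<and> (s = 0 \<or> P 0 x = 0 \<longrightarrow> hit_time s x = 0)
     \<and> (P 0 x \<noteq> 0 \<and> P 1 x = 0 \<and> W 1 x = 0 \<longrightarrow> hit_time s x = s)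
     \<and> (\<not> (s = 0 \<or> P 0 x = 0) \<and> \<not> (P 0 x \<noteq> 0 \<and> P 1 x = 0 \<and> W 1 x = 0)
          \<longrightarrow> 0 \<le> hit_time s x \<and> hit_time s x \<le> s)
     \<and> (P 0 x \<noteq> 0 \<longrightarrow> (\<forall>t\<in>{0..hit_time s x}. P 0 (\<xi> t x) * P 0 x > 0))"
proof (cases "P 0 x = 0")
  case True
  then show ?thesis using init by (simp add: hit_time_def)
next
  case False
  then show ?thesis
    using first_hit[OF False s] first_hit_0[OF False] first_hit_on_graph[OF False s]
      first_hit_is_first[OF False s] sign_preserved_until_first_hit[OF False s]
      first_hit_stationary[OF False _ _ s]
    by (auto simp: hit_time_def)
qed

lemma hit_time_C2: "C2_on ({0..1} \<times> {x. P 0 x \<noteq> 0}) (\<lambda>(s,x). hit_time s x)"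
  by (rule C2_on_cong[OF first_hit_C2]) (auto simp: hit_time_def)

end

theorem theorem3p3:
  fixes w :: "real \<Rightarrow> real" and p :: "real poly" and a b :: real
    and \<xi> \<eta> :: "real \<Rightarrow> real \<Rightarrow> real"
  assumes w_C3: "C3 w" and w_per: "periodic w"
    and w_pos: "\<forall>x\<in>{-1..1}. w x > 0"
    and ab: "-1 < a" "a < b" "b < 1"
    and p_a: "\<forall>k\<le>3. poly ((pderiv ^^ k) p) a = 0"
    and p_b: "\<forall>k\<le>3. poly ((pderiv ^^ k) p) b = 0"
    and ode_\<xi>: "\<forall>x t. ((\<lambda>t. \<xi> t x) has_real_derivative
        (- deriv w (\<xi> t x) * bump p a b (\<xi> t x)
         - (\<eta> t x - w (\<xi> t x)) * deriv (bump p a b) (\<xi> t x))) (at t)"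
    and ode_\<eta>: "\<forall>x t. ((\<lambda>t. \<eta> t x) has_real_derivative bump p a b (\<xi> t x)) (at t)"
    and init: "\<forall>x. \<xi> 0 x = x \<and> \<eta> 0 x = w x"
  shows "\<exists>t0 :: real \<Rightarrow> real \<Rightarrow> real.
    (\<forall>s\<in>{0..1}. \<forall>x.
       t0 s x \<ge> 0
     \<and> \<eta> (t0 s x) x = w (\<xi> (t0 s x) x) + s * bump p a b (\<xi> (t0 s x) x)
     \<and> (\<forall>t. 0 \<le> t \<and> t < t0 s x \<longrightarrow> \<eta> t x \<noteq> w (\<xi> t x) + s * bump p a b (\<xi> t x))
     \<and> (s = 0 \<or> bump p a b x = 0 \<longrightarrow> t0 s x = 0)
     \<and> (bump p a b x \<noteq> 0 \<and> deriv (bump p a b) x = 0 \<and> deriv w x = 0 \<longrightarrow> t0 s x = s)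
     \<and> (\<not> (s = 0 \<or> bump p a b x = 0)
          \<and> \<not> (bump p a b x \<noteq> 0 \<and> deriv (bump p a b) x = 0 \<and> deriv w x = 0)
          \<longrightarrow> 0 \<le> t0 s x \<and> t0 s x \<le> s)
     \<and> (bump p a b x \<noteq> 0 \<longrightarrow>
          (\<forall>t\<in>{0..t0 s x}. bump p a b (\<xi> t x) * bump p a b x > 0)))
    \<and> C2_on ({0..1} \<times> {x. bump p a b x \<noteq> 0}) (\<lambda>(s, x). t0 s x)"
proof -
  interpret crossing w p a b \<xi> \<eta>
    by unfold_locales (use w_C3 ab p_a p_b ode_\<xi> ode_\<eta> init in auto)
  show ?thesis
    unfolding bump_eq_P deriv_P deriv_w_eq_W
    using hit_time_properties hit_time_C2 by blast
qed

end
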